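(* Let $S$ be a finite set and $r:S\times S\to[0,\infty)$ with $r(x,y)>0$ for all distinct $x,y\in S$. Consider the inclusion process on $S$ with underlying rates $r$ and parameter $d_N>0$ satisfying $\lim_{N\to\infty}d_N\frac{N^2}{(\log N)^2}=0$. Fix $\delta>0$ and let $\mathcal U_N=\{\eta\in\mathcal H_N:\eta_x\le\delta\log N\text{ for some }x\in S\}$, and let $\tau_{\mathcal U_N}$ be the hitting time of $\mathcal U_N$ by the inclusion process. Then there exists a constant $C=C(\delta)>0$ such that for all $N$, $$\sup_{\eta\in\mathcal H_N}\mathbb E_\eta[\tau_{\mathcal U_N}]\le CN.$$
   Context: $\mathcal H_N=\{\eta\in\{0,1,2,\dots\}^S:\sum_{x\in S}\eta_x=N\}$; for $\eta$ with $\eta_x\ge1$, $\sigma^{x,y}\eta$ moves one particle from $x$ to $y$ ($\sigma^{x,y}\eta=\eta$ if $\eta_x=0$). The inclusion process $\eta_N(\cdot)$ is the continuous-time Markov chain on $\mathcal H_N$ with generator $(\mathcal L_NF)(\eta)=\sum_{x\ne y}\eta_x(d_N+\eta_y)r(x,y)\{F(\sigma^{x,y}\eta)-F(\eta)\}$; $\mathbb E_\eta$ is expectation for the process started at $\eta$. *)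

theory Defs
  imports "HOL-Analysis.Analysis"
begin

definition config_space :: "'a set \<Rightarrow> nat \<Rightarrow> ('a \<Rightarrow> nat) set" where
  "config_space S N = {\<eta>. (\<forall>x. x \<notin> S \<longrightarrow> \<eta> x = 0) \<and> (\<Sum>x\<in>S. \<eta> x) = N}"

definition move :: "'a \<Rightarrow> 'a \<Rightarrow> ('a \<Rightarrow> nat) \<Rightarrow> ('a \<Rightarrow> nat)" where
  "move x y \<eta> = (if 1 \<le> \<eta> x then (\<eta>(x := \<eta> x - 1))(y := \<eta> y + 1) else \<eta>)"

definition site_pairs :: "'a set \<Rightarrow> ('a \<times> 'a) set" where
  "site_pairs S = {(x, y). x \<in> S \<and> y \<in> S \<and> x \<noteq> y}"

definition incl_rate :: "('a \<Rightarrow> 'a \<Rightarrow> real) \<Rightarrow> real \<Rightarrow> ('a \<Rightarrow> nat) \<Rightarrow> 'a \<Rightarrow> 'a \<Rightarrow> real" where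
  "incl_rate r dN \<eta> x y = real (\<eta> x) * (dN + real (\<eta> y)) * r x y"

definition incl_total_rate :: "'a set \<Rightarrow> ('a \<Rightarrow> 'a \<Rightarrow> real) \<Rightarrow> real \<Rightarrow> ('a \<Rightarrow> nat) \<Rightarrow> real" where
  "incl_total_rate S r dN \<eta> = (\<Sum>(x, y)\<in>site_pairs S. incl_rate r dN \<eta> x y)"

text \<open>First-step (jump chain / holding time) operator for the expected hitting time of U:
  h(eta) = 0 on U, and off U
  h(eta) = 1/q(eta) + sum_{x<>y} (rate(eta,x,y)/q(eta)) h(sigma^{x,y} eta),
  with 1/0 = infinity in ennreal (a state with no jumps never reaches U).\<close>
definition incl_hit_step ::
  "'a set \<Rightarrow> ('a \<Rightarrow> 'a \<Rightarrow> real) \<Rightarrow> real \<Rightarrow> ('a \<Rightarrow> nat) set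
    \<Rightarrow> (('a \<Rightarrow> nat) \<Rightarrow> ennreal) \<Rightarrow> ('a \<Rightarrow> nat) \<Rightarrow> ennreal" where
  "incl_hit_step S r dN U h \<eta> =
     (if \<eta> \<in> U then 0
      else inverse (ennreal (incl_total_rate S r dN \<eta>)) +
           (\<Sum>(x, y)\<in>site_pairs S.
              ennreal (incl_rate r dN \<eta> x y / incl_total_rate S r dN \<eta>) * h (move x y \<eta>)))"

text \<open>E_eta[tau_U] for the inclusion process with parameter dN: the minimal nonnegative
  (possibly infinite) solution of the first-step equations, i.e. the least fixed point.\<close>
definition incl_expected_hitting_time ::
  "'a set \<Rightarrow> ('a \<Rightarrow> 'a \<Rightarrow> real) \<Rightarrow> real \<Rightarrow> ('a \<Rightarrow> nat) set \<Rightarrow> ('a \<Rightarrow> nat) \<Rightarrow> ennreal" where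
  "incl_expected_hitting_time S r dN U = lfp (incl_hit_step S r dN U)"

end

theory Submission
  imports Defs
begin

text \<open>
  By the minimax theorem for the skew-symmetric matrix r x y - r y x
  (obtained here from Farkas' lemma) there is a probability vector m with
  \<open>\<Sum>y. (r x y - r y x) * m y \<le> 0\<close> for every site x. For W \<eta> = \<Sum>x. m x * ln (\<eta> x), the
  leading part of the generator applied to W is \<open>\<Sum>x. \<eta> x * \<Sum>y. (r x y - r y x) * m y \<le> 0\<close>,
  and the second-order term of the logarithm contributes at most -rmin * l / (4 * N) as long as
  every site holds more than l = \<delta> * ln N particles; the terms carrying d N are of smaller
  order because d N * N ^ 2 / (ln N) ^ 2 tends to 0. Hence 8 * N / (rmin * l) * W has drift at most -1
  off U, and its range 8 * N * ln N / (rmin * l) = 8 * N / (rmin * \<delta>) bounds the expected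
  hitting time for large N. For the remaining N, the function B * (1 - \<theta> ^ \<eta> x0) with tiny
  \<theta> gives some finite bound.
\<close>

section \<open>Farkas' lemma by Fourier-Motzkin elimination\<close>

text \<open>A pair (a, b) stands for the linear inequality \<open>\<Sum>v. a v * x v \<le> b\<close>;
  ineq_cone R consists of the nonnegative combinations of the inequalities in R.\<close>

inductive_set ineq_cone :: "(('v \<Rightarrow> real) \<times> real) set \<Rightarrow> (('v \<Rightarrow> real) \<times> real) set"
  for R where
  zero: "((\<lambda>_. 0), 0) \<in> ineq_cone R"
| step: "(a, b) \<in> R \<Longrightarrow> 0 \<le> c \<Longrightarrow> (a', b') \<in> ineq_cone R \<Longrightarrow>
     ((\<lambda>v. c * a v + a' v), c * b + b') \<in> ineq_cone R"

lemma ineq_cone_base: "p \<in> R \<Longrightarrow> p \<in> ineq_cone R"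
  using ineq_cone.step[OF _ zero_le_one ineq_cone.zero, of "fst p" "snd p"] by simp

lemma ineq_cone_add:
  "(a, b) \<in> ineq_cone R \<Longrightarrow> (a', b') \<in> ineq_cone R \<Longrightarrow> ((\<lambda>v. a v + a' v), b + b') \<in> ineq_cone R"
proof (induction rule: ineq_cone.induct)
  case (step a b c a'' b'')
  from ineq_cone.step[OF step.hyps(1,2) step.IH[OF step.prems]] show ?case
    by (simp add: add.assoc)
qed simp

lemma ineq_cone_scale:
  "(a, b) \<in> ineq_cone R \<Longrightarrow> 0 \<le> c \<Longrightarrow> ((\<lambda>v. c * a v), c * b) \<in> ineq_cone R"
proof (induction rule: ineq_cone.induct)
  case zero
  then show ?case using ineq_cone.zero by simp
next
  case (step a b c' a' b')
  from ineq_cone.step[OF step.hyps(1) _ step.IH[OF step.prems], of "c * c'"] step.prems step.hyps(2)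
  show ?case by (simp add: algebra_simps)
qed

lemma ineq_cone_mono: "(a, b) \<in> ineq_cone R' \<Longrightarrow> R' \<subseteq> ineq_cone R \<Longrightarrow> (a, b) \<in> ineq_cone R"
proof (induction rule: ineq_cone.induct)
  case (step a b c a' b')
  then show ?case using ineq_cone_add[OF ineq_cone_scale] by blast
qed (rule ineq_cone.zero)

lemma ineq_cone_coord_eq_0: "(a, b) \<in> ineq_cone R \<Longrightarrow> \<forall>p\<in>R. fst p w = 0 \<Longrightarrow> a w = 0"
  by (induction rule: ineq_cone.induct) auto

definition fm_eliminate :: "'v \<Rightarrow> (('v \<Rightarrow> real) \<times> real) set \<Rightarrow> (('v \<Rightarrow> real) \<times> real) set" where
  "fm_eliminate w R = {p \<in> R. fst p w = 0} \<union>
     (\<lambda>(p, q). ((\<lambda>v. - fst q w * fst p v + fst p w * fst q v), - fst q w * snd p + fst p w * snd q))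
       ` ({p \<in> R. fst p w > 0} \<times> {q \<in> R. fst q w < 0})"

lemma finite_fm_eliminate: "finite R \<Longrightarrow> finite (fm_eliminate w R)"
  by (simp add: fm_eliminate_def)

lemma fm_eliminate_coord_eq_0: "p \<in> fm_eliminate w R \<Longrightarrow> fst p w = 0"
  by (auto simp: fm_eliminate_def)

lemma fm_eliminate_subset_ineq_cone: "fm_eliminate w R \<subseteq> ineq_cone R"
proof
  fix p assume "p \<in> fm_eliminate w R"
  then consider "p \<in> R"
    | p1 p2 where "p1 \<in> R" "fst p1 w > 0" "p2 \<in> R" "fst p2 w < 0"
      "p = ((\<lambda>v. - fst p2 w * fst p1 v + fst p1 w * fst p2 v), - fst p2 w * snd p1 + fst p1 w * snd p2)"
    unfolding fm_eliminate_def by auto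
  then show "p \<in> ineq_cone R"
  proof cases
    case 2
    have "((\<lambda>v. fst p1 w * fst p2 v), fst p1 w * snd p2) \<in> ineq_cone R"
      using ineq_cone_scale[OF ineq_cone_base[of "(fst p2, snd p2)"]] 2 by simp
    from ineq_cone.step[of "fst p1" "snd p1" R "- fst p2 w", OF _ _ this] 2 show ?thesis
      by (simp add: algebra_simps)
  qed (rule ineq_cone_base)
qed

lemma exists_between_finite:
  fixes L H :: "real set"
  assumes "finite L" "finite H" "\<forall>l\<in>L. \<forall>h\<in>H. l \<le> h"
  shows "\<exists>t. (\<forall>l\<in>L. l \<le> t) \<and> (\<forall>h\<in>H. t \<le> h)"
proof (cases "L = {}")
  case True
  then show ?thesis using assms by (cases "H = {}") (auto intro!: exI[of _ "Min H"])
next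
  case False
  then show ?thesis using assms by (intro exI[of _ "Max L"]) auto
qed

lemma fm_eliminate_bounds_ordered:
  fixes x :: "'v \<Rightarrow> real" and V :: "'v set"
  defines "s \<equiv> \<lambda>p. \<Sum>v\<in>V. fst p v * x v"
  assumes sol: "\<forall>p\<in>fm_eliminate w R. s p \<le> snd p"
    and p: "p \<in> R" "0 < fst p w" and q: "q \<in> R" "fst q w < 0"
  shows "(snd q - s q) / fst q w \<le> (snd p - s p) / fst p w"
proof -
  have "((\<lambda>v. - fst q w * fst p v + fst p w * fst q v), - fst q w * snd p + fst p w * snd q)
      \<in> fm_eliminate w R"
    unfolding fm_eliminate_def by (intro UnI2 image_eqI[where x = "(p, q)"]) (use p q in auto)
  then have "(\<Sum>v\<in>V. (- fst q w * fst p v + fst p w * fst q v) * x v)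
      \<le> - fst q w * snd p + fst p w * snd q"
    using sol by (auto simp: s_def)
  also have "(\<Sum>v\<in>V. (- fst q w * fst p v + fst p w * fst q v) * x v) = - fst q w * s p + fst p w * s q"
    by (simp add: s_def sum_subtractf sum_negf sum_distrib_left algebra_simps)
  finally have "fst q w * (snd p - s p) \<le> fst p w * (snd q - s q)"
    by (simp add: algebra_simps)
  then have "(fst p w * fst q w) * ((snd p - s p) / fst p w) \<le> (fst p w * fst q w) * ((snd q - s q) / fst q w)"
    using p(2) q(2) by simp
  moreover have "fst p w * fst q w < 0" using p(2) q(2) by (simp add: mult_pos_neg)
  ultimately show ?thesis by (metis mult_le_cancel_left_neg)
qed

text \<open>Eliminating w loses no solutions: a solution of the eliminated system extends,
  because every lower bound on the w-coordinate forced by some q with fst q w < 0 lies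
  below every upper bound forced by some p with fst p w > 0.\<close>

lemma fm_eliminate_solution_extends:
  fixes x :: "'v \<Rightarrow> real"
  assumes "finite V" "finite R" "w \<notin> V"
    and sol: "\<forall>p\<in>fm_eliminate w R. (\<Sum>v\<in>V. fst p v * x v) \<le> snd p"
  shows "\<exists>x'. \<forall>p\<in>R. (\<Sum>v\<in>insert w V. fst p v * x' v) \<le> snd p"
proof -
  define s where "s p = (\<Sum>v\<in>V. fst p v * x v)" for p :: "('v \<Rightarrow> real) \<times> real"
  define bound where "bound p = (snd p - s p) / fst p w" for p
  define Rp where "Rp = {p \<in> R. fst p w > 0}"
  define Rn where "Rn = {q \<in> R. fst q w < 0}"
  have "\<forall>l\<in>bound ` Rn. \<forall>h\<in>bound ` Rp. l \<le> h"
    using fm_eliminate_bounds_ordered[where V = V and x = x and w = w and R = R] sol by (auto simp: bound_def s_def Rp_def Rn_def)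
  moreover have "finite (bound ` Rn)" "finite (bound ` Rp)"
    using assms(2) unfolding Rn_def Rp_def by auto
  ultimately obtain t where t: "\<forall>l\<in>bound ` Rn. l \<le> t" "\<forall>h\<in>bound ` Rp. t \<le> h"
    using exists_between_finite by meson
  have "(\<Sum>v\<in>insert w V. fst p v * (x(w := t)) v) \<le> snd p" if "p \<in> R" for p
  proof -
    have "(\<Sum>v\<in>V. fst p v * (x(w := t)) v) = s p"
      unfolding s_def using assms(3) by (intro sum.cong) auto
    then have eq: "(\<Sum>v\<in>insert w V. fst p v * (x(w := t)) v) = fst p w * t + s p"
      using assms(1,3) by simp
    consider "fst p w = 0" | "fst p w > 0" | "fst p w < 0" by linarith
    then show ?thesis
    proof cases
      case 1
      then have "p \<in> fm_eliminate w R" using that unfolding fm_eliminate_def by auto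
      then show ?thesis using sol 1 eq unfolding s_def by auto
    next
      case 2
      then have "t \<le> bound p" using t(2) that unfolding Rp_def by blast
      then show ?thesis using 2 eq unfolding bound_def by (simp add: field_simps)
    next
      case 3
      then have "bound p \<le> t" using t(1) that unfolding Rn_def by blast
      then show ?thesis using 3 eq unfolding bound_def by (simp add: field_simps)
    qed
  qed
  then show ?thesis by blast
qed

theorem fourier_motzkin:
  fixes R :: "(('v \<Rightarrow> real) \<times> real) set"
  assumes "finite V" "finite R" "\<nexists>x. \<forall>p\<in>R. (\<Sum>v\<in>V. fst p v * x v) \<le> snd p"
  shows "\<exists>(a, b)\<in>ineq_cone R. (\<forall>v\<in>V. a v = 0) \<and> b < 0"
  using assms
proof (induction V arbitrary: R rule: finite_induct)
  case empty
  then obtain p where "p \<in> R" "snd p < 0" by (auto simp: not_le)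
  then show ?case using ineq_cone_base[of p R] by (intro bexI[of _ p]) auto
next
  case (insert w V)
  have "\<nexists>x. \<forall>p\<in>fm_eliminate w R. (\<Sum>v\<in>V. fst p v * x v) \<le> snd p"
  proof
    assume "\<exists>x. \<forall>p\<in>fm_eliminate w R. (\<Sum>v\<in>V. fst p v * x v) \<le> snd p"
    then obtain x where "\<forall>p\<in>fm_eliminate w R. (\<Sum>v\<in>V. fst p v * x v) \<le> snd p" ..
    from fm_eliminate_solution_extends[OF insert.hyps(1) insert.prems(1) insert.hyps(2) this]
    show False using insert.prems(2) by blast
  qed
  with insert.IH[OF finite_fm_eliminate[OF insert.prems(1)]]
  obtain a b where ab: "(a, b) \<in> ineq_cone (fm_eliminate w R)" "\<forall>v\<in>V. a v = 0" "b < 0"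
    by blast
  have "(a, b) \<in> ineq_cone R"
    using ineq_cone_mono[OF ab(1) fm_eliminate_subset_ineq_cone] .
  moreover have "a w = 0"
    using ineq_cone_coord_eq_0[OF ab(1), of w] fm_eliminate_coord_eq_0[of _ w R] by blast
  ultimately show ?case using ab by (intro bexI[of _ "(a, b)"]) auto
qed

lemma ineq_cone_image_nonneg_comb:
  fixes lhs :: "'i \<Rightarrow> 'v \<Rightarrow> real" and rhs :: "'i \<Rightarrow> real"
  assumes "(a, b) \<in> ineq_cone ((\<lambda>i. (lhs i, rhs i)) ` I)" "finite I"
  shows "\<exists>c. (\<forall>i\<in>I. 0 \<le> c i) \<and> a = (\<lambda>v. \<Sum>i\<in>I. c i * lhs i v) \<and> b = (\<Sum>i\<in>I. c i * rhs i)"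
  using assms(1)
proof (induction rule: ineq_cone.induct)
  case zero
  show ?case by (intro exI[of _ "\<lambda>_. 0"]) simp
next
  case (step a0 b0 c0 a b)
  from step.hyps(1) obtain i0 where i0: "i0 \<in> I" "a0 = lhs i0" "b0 = rhs i0" by auto
  from step.IH obtain c where c: "\<forall>i\<in>I. 0 \<le> c i"
    "a = (\<lambda>v. \<Sum>i\<in>I. c i * lhs i v)" "b = (\<Sum>i\<in>I. c i * rhs i)" by blast
  define c' where "c' i = c i + (if i = i0 then c0 else 0)" for i
  have "(\<Sum>i\<in>I. c' i * f i) = (\<Sum>i\<in>I. c i * f i + (if i = i0 then c0 * f i else 0))"
    for f :: "_ \<Rightarrow> real"
    by (intro sum.cong) (auto simp: c'_def algebra_simps)
  then have "(\<Sum>i\<in>I. c' i * f i) = c0 * f i0 + (\<Sum>i\<in>I. c i * f i)" for f :: "_ \<Rightarrow> real"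
    using i0(1) assms(2) by (simp add: sum.distrib)
  then show ?case
    using c step.hyps(2) i0 by (intro exI[of _ c']) (auto simp: c'_def)
qed

theorem farkas_lemma:
  fixes lhs :: "'i \<Rightarrow> 'v \<Rightarrow> real" and rhs :: "'i \<Rightarrow> real"
  assumes "finite V" "finite I" "\<nexists>x. \<forall>i\<in>I. (\<Sum>v\<in>V. lhs i v * x v) \<le> rhs i"
  shows "\<exists>c. (\<forall>i\<in>I. 0 \<le> c i) \<and> (\<forall>v\<in>V. (\<Sum>i\<in>I. c i * lhs i v) = 0)
           \<and> (\<Sum>i\<in>I. c i * rhs i) < 0"
proof -
  have "\<nexists>x. \<forall>p\<in>(\<lambda>i. (lhs i, rhs i)) ` I. (\<Sum>v\<in>V. fst p v * x v) \<le> snd p"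
    using assms(3) by simp
  from fourier_motzkin[OF assms(1) _ this] assms(2)
  obtain a b where "(a, b) \<in> ineq_cone ((\<lambda>i. (lhs i, rhs i)) ` I)" "\<forall>v\<in>V. a v = 0" "b < 0"
    by auto
  with ineq_cone_image_nonneg_comb[OF _ assms(2)] show ?thesis by metis
qed

lemma normalized_nonneg_solution:
  fixes x :: "'a \<Rightarrow> real"
  assumes "\<forall>y\<in>S. 0 \<le> x y" "0 < (\<Sum>y\<in>S. x y)" "\<forall>z\<in>S. (\<Sum>y\<in>S. A z y * x y) \<le> 0"
  shows "\<exists>m. (\<forall>y\<in>S. 0 \<le> m y) \<and> (\<Sum>y\<in>S. m y) = 1 \<and> (\<forall>z\<in>S. (\<Sum>y\<in>S. A z y * m y) \<le> 0)"
proof (intro exI conjI ballI)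
  let ?s = "\<Sum>y\<in>S. x y"
  show "0 \<le> x y / ?s" if "y \<in> S" for y using assms(1,2) that by simp
  show "(\<Sum>y\<in>S. x y / ?s) = 1" using assms(2) by (simp add: sum_divide_distrib[symmetric])
  show "(\<Sum>y\<in>S. A z y * (x y / ?s)) \<le> 0" if "z \<in> S" for z
  proof -
    have "(\<Sum>y\<in>S. A z y * (x y / ?s)) = (\<Sum>y\<in>S. A z y * x y) / ?s"
      by (simp add: sum_divide_distrib)
    then show ?thesis using assms(2,3) that by (simp add: divide_nonpos_pos)
  qed
qed

section \<open>The value of a skew-symmetric game\<close>

lemma ville_alternative:
  fixes A :: "'a \<Rightarrow> 'a \<Rightarrow> real"
  assumes fin: "finite S"
    and no_strategy: "\<nexists>m. (\<forall>y\<in>S. 0 \<le> m y) \<and> (\<Sum>y\<in>S. m y) = 1 \<and> (\<forall>x\<in>S. (\<Sum>y\<in>S. A x y * m y) \<le> 0)"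
  shows "\<exists>\<mu>. (\<forall>x\<in>S. 0 \<le> \<mu> x) \<and> (\<forall>v\<in>S. 0 < (\<Sum>x\<in>S. \<mu> x * A x v))"
proof -
  txt \<open>Constraint None is \<open>\<Sum>y. x y \<ge> 1\<close>, Some (Inl z) is row z of A, and Some (Inr y) is \<open>x y \<ge> 0\<close>.\<close>
  define I :: "('a + 'a) option set" where "I = insert None (Some ` (S <+> S))"
  define lhs :: "('a + 'a) option \<Rightarrow> 'a \<Rightarrow> real" where
    "lhs i = (case i of None \<Rightarrow> (\<lambda>_. -1) | Some (Inl x) \<Rightarrow> A x
                | Some (Inr y) \<Rightarrow> (\<lambda>v. if v = y then -1 else 0))" for i
  define rhs :: "('a + 'a) option \<Rightarrow> real" where "rhs i = (if i = None then -1 else 0)" for i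
  have sum_I: "(\<Sum>i\<in>I. f i) = f None + (\<Sum>x\<in>S. f (Some (Inl x))) + (\<Sum>y\<in>S. f (Some (Inr y)))"
    for f :: "('a + 'a) option \<Rightarrow> real"
    using fin by (simp add: I_def sum.reindex sum.Plus comp_def)
  have None_in_I: "None \<in> I" by (simp add: I_def)
  have Some_in_I: "Some (Inl z) \<in> I" "Some (Inr z) \<in> I" if "z \<in> S" for z
    using that by (auto simp: I_def intro: InlI InrI)
  have lhs_Inr: "(\<Sum>v\<in>S. f v * lhs (Some (Inr y)) v) = - f y"
    "(\<Sum>z\<in>S. f z * lhs (Some (Inr z)) y) = - f y" if "y \<in> S" for f y
  proof -
    have "(\<Sum>v\<in>S. f v * lhs (Some (Inr y)) v) = (\<Sum>v\<in>S. if v = y then - f v else 0)"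
      "(\<Sum>z\<in>S. f z * lhs (Some (Inr z)) y) = (\<Sum>z\<in>S. if z = y then - f z else 0)"
      by (auto simp: lhs_def intro!: sum.cong)
    then show "(\<Sum>v\<in>S. f v * lhs (Some (Inr y)) v) = - f y"
      "(\<Sum>z\<in>S. f z * lhs (Some (Inr z)) y) = - f y" using that fin by simp_all
  qed
  have "\<nexists>x. \<forall>i\<in>I. (\<Sum>v\<in>S. lhs i v * x v) \<le> rhs i"
  proof
    assume "\<exists>x. \<forall>i\<in>I. (\<Sum>v\<in>S. lhs i v * x v) \<le> rhs i"
    then obtain x where x: "\<And>i. i \<in> I \<Longrightarrow> (\<Sum>v\<in>S. lhs i v * x v) \<le> rhs i" by blast
    have "0 \<le> x y" if "y \<in> S" for y
      using x[OF Some_in_I(2)[OF that]] lhs_Inr(1)[OF that, of x] by (simp add: rhs_def mult.commute)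
    moreover have "1 \<le> (\<Sum>y\<in>S. x y)"
      using x[OF None_in_I] by (simp add: lhs_def rhs_def sum_negf)
    moreover have "(\<Sum>y\<in>S. A z y * x y) \<le> 0" if "z \<in> S" for z
      using x[OF Some_in_I(1)[OF that]] by (simp add: lhs_def rhs_def)
    ultimately show False
      using normalized_nonneg_solution[of S x A] no_strategy by fastforce
  qed
  from farkas_lemma[OF fin _ this] obtain c where c: "\<forall>i\<in>I. 0 \<le> c i"
    "\<forall>v\<in>S. (\<Sum>i\<in>I. c i * lhs i v) = 0" "(\<Sum>i\<in>I. c i * rhs i) < 0"
    using fin by (auto simp: I_def)
  show ?thesis
  proof (intro exI conjI ballI)
    show "0 \<le> c (Some (Inl x))" if "x \<in> S" for x
      using c(1) Some_in_I(1)[OF that] by simp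
    fix v assume v: "v \<in> S"
    have "lhs None = (\<lambda>_. -1)" "lhs (Some (Inl x)) = A x" for x by (simp_all add: lhs_def)
    then have "0 = - c None + (\<Sum>x\<in>S. c (Some (Inl x)) * A x v) - c (Some (Inr v))"
      using bspec[OF c(2) v] lhs_Inr(2)[OF v, of "\<lambda>y. c (Some (Inr y))"] by (simp add: sum_I)
    moreover have "0 < c None" using c(3) by (simp add: sum_I rhs_def)
    moreover have "0 \<le> c (Some (Inr v))" using c(1) Some_in_I(2)[OF v] by simp
    ultimately show "0 < (\<Sum>x\<in>S. c (Some (Inl x)) * A x v)" by linarith
  qed
qed

lemma skew_symmetric_game_value:
  fixes A :: "'a \<Rightarrow> 'a \<Rightarrow> real"
  assumes fin: "finite S" and ne: "S \<noteq> {}"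
    and skew: "\<And>x y. x \<in> S \<Longrightarrow> y \<in> S \<Longrightarrow> A y x = - A x y"
  shows "\<exists>m. (\<forall>y\<in>S. 0 \<le> m y) \<and> (\<Sum>y\<in>S. m y) = 1 \<and> (\<forall>x\<in>S. (\<Sum>y\<in>S. A x y * m y) \<le> 0)"
proof (rule ccontr)
  assume no_strategy: "\<not> ?thesis"
  then obtain \<mu> where \<mu>: "\<forall>x\<in>S. 0 \<le> \<mu> x" "\<forall>v\<in>S. 0 < (\<Sum>x\<in>S. \<mu> x * A x v)"
    using ville_alternative[OF fin] by blast
  have \<mu>_neg: "(\<Sum>y\<in>S. A v y * \<mu> y) < 0" if "v \<in> S" for v
    using \<mu>(2) skew[OF _ that] that by (simp add: sum_negf mult.commute)
  have "(\<Sum>x\<in>S. \<mu> x) \<noteq> 0"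
  proof
    assume "(\<Sum>x\<in>S. \<mu> x) = 0"
    then have "\<forall>x\<in>S. \<mu> x = 0" using \<mu>(1) fin by (simp add: sum_nonneg_eq_0_iff)
    then show False using \<mu>(2) ne by auto
  qed
  then have "0 < (\<Sum>x\<in>S. \<mu> x)" using \<mu>(1) by (simp add: order_less_le sum_nonneg)
  then show False
    using normalized_nonneg_solution[of S \<mu> A] no_strategy \<mu>(1) \<mu>_neg by (fastforce intro: less_imp_le)
qed

section \<open>Lyapunov bounds for the expected hitting time\<close>

lemma finite_site_pairs: "finite S \<Longrightarrow> finite (site_pairs S)"
  unfolding site_pairs_def by (rule finite_subset[of _ "S \<times> S"]) auto

lemma sum_site_pairs:
  "finite S \<Longrightarrow> (\<Sum>(x, y)\<in>site_pairs S. f x y) = (\<Sum>x\<in>S. \<Sum>y\<in>S - {x}. f x y)"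
proof -
  have "site_pairs S = Sigma S (\<lambda>x. S - {x})" unfolding site_pairs_def by auto
  then show "finite S \<Longrightarrow> ?thesis" by (simp add: sum.Sigma)
qed

lemma ex_site_pair:
  assumes "2 \<le> card S"
  shows "\<exists>x y. (x, y) \<in> site_pairs S"
proof -
  obtain a B where "S = insert a B" "a \<notin> B" "1 \<le> card B"
    using assms card_le_Suc_iff[of 1 S] by auto
  moreover from \<open>1 \<le> card B\<close> obtain b where "b \<in> B" by fastforce
  ultimately show ?thesis unfolding site_pairs_def by blast
qed

lemma config_space_le: "\<eta> \<in> config_space S N \<Longrightarrow> finite S \<Longrightarrow> \<eta> x \<le> N"
  unfolding config_space_def by (cases "x \<in> S") (auto intro: member_le_sum[of x S \<eta>, simplified])

lemma move_in_config_space: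
  assumes "\<eta> \<in> config_space S N" "finite S" "(x, y) \<in> site_pairs S"
  shows "move x y \<eta> \<in> config_space S N"
proof (cases "1 \<le> \<eta> x")
  case True
  have xy: "x \<in> S" "y \<in> S" "x \<noteq> y" using assms(3) by (auto simp: site_pairs_def)
  have "(\<Sum>z\<in>S. move x y \<eta> z + (if z = x then 1 else 0)) = (\<Sum>z\<in>S. \<eta> z + (if z = y then 1 else 0))"
    using True xy by (intro sum.cong) (auto simp: move_def)
  then have "(\<Sum>z\<in>S. move x y \<eta> z) = (\<Sum>z\<in>S. \<eta> z)"
    using xy assms(2) by (simp add: sum.distrib)
  then show ?thesis using assms(1) xy by (auto simp: config_space_def move_def)
qed (use assms in \<open>simp add: move_def\<close>)

lemma incl_rate_nonneg:
  "0 \<le> dN \<Longrightarrow> 0 \<le> r x y \<Longrightarrow> 0 \<le> incl_rate r dN \<eta> x y"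
  by (simp add: incl_rate_def)

lemma incl_total_rate_pos:
  assumes "finite S" "0 < dN" "\<And>x y. x \<in> S \<Longrightarrow> y \<in> S \<Longrightarrow> 0 \<le> r x y"
    and "(x, y) \<in> site_pairs S" "0 < r x y" "1 \<le> \<eta> x"
  shows "0 < incl_total_rate S r dN \<eta>"
proof -
  have "0 < incl_rate r dN \<eta> x y" using assms(2,5,6) by (simp add: incl_rate_def)
  also have "\<dots> \<le> incl_total_rate S r dN \<eta>"
  proof -
    have nonneg: "0 \<le> (\<lambda>(x, y). incl_rate r dN \<eta> x y) p" if "p \<in> site_pairs S - {(x, y)}" for p
      using that assms(2,3) by (auto simp: site_pairs_def intro!: incl_rate_nonneg)
    from member_le_sum[of "(x, y)" "site_pairs S" "\<lambda>(x, y). incl_rate r dN \<eta> x y",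
        OF assms(4) nonneg finite_site_pairs[OF assms(1)]] show ?thesis
      by (simp add: incl_total_rate_def)
  qed
  finally show ?thesis .
qed

lemma incl_total_rate_pos_of_occupied:
  assumes "finite S" "2 \<le> card S" "0 < dN" "\<And>x y. x \<in> S \<Longrightarrow> y \<in> S \<Longrightarrow> 0 \<le> r x y"
    and "\<And>x y. x \<in> S \<Longrightarrow> y \<in> S \<Longrightarrow> x \<noteq> y \<Longrightarrow> 0 < r x y" "\<forall>x\<in>S. 1 \<le> \<eta> x"
  shows "0 < incl_total_rate S r dN \<eta>"
proof -
  obtain x y where xy: "(x, y) \<in> site_pairs S" using ex_site_pair[OF assms(2)] by blast
  then have "0 < r x y" "1 \<le> \<eta> x" using assms(5,6) by (auto simp: site_pairs_def)
  with xy show ?thesis using incl_total_rate_pos[of S dN r x y \<eta>, OF assms(1,3,4)] by blast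
qed

lemma sum_ennreal_mult_le:
  assumes "finite P" "\<And>p. p \<in> P \<Longrightarrow> 0 \<le> w p" "\<And>p. p \<in> P \<Longrightarrow> 0 \<le> f p"
    and "\<And>p. p \<in> P \<Longrightarrow> G p \<le> ennreal (f p)"
  shows "(\<Sum>p\<in>P. ennreal (w p) * G p) \<le> ennreal (\<Sum>p\<in>P. w p * f p)"
proof -
  have "(\<Sum>p\<in>P. ennreal (w p) * G p) \<le> (\<Sum>p\<in>P. ennreal (w p * f p))"
    using assms(2-4) by (intro sum_mono) (simp add: ennreal_mult'' mult_left_mono)
  also have "\<dots> = ennreal (\<Sum>p\<in>P. w p * f p)"
    using assms(2,3) by (simp add: sum_ennreal)
  finally show ?thesis .
qed

lemma first_step_bound_of_drift:
  fixes w f :: "'p \<Rightarrow> real"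
  assumes "0 < (\<Sum>p\<in>P. w p)" "1 + (\<Sum>p\<in>P. w p * (f p - v)) \<le> 0"
  shows "1 / (\<Sum>p\<in>P. w p) + (\<Sum>p\<in>P. w p / (\<Sum>p\<in>P. w p) * f p) \<le> v"
proof -
  have "(\<Sum>p\<in>P. w p * (f p - v)) = (\<Sum>p\<in>P. w p * f p) - (\<Sum>p\<in>P. w p) * v"
    by (simp add: right_diff_distrib sum_subtractf sum_distrib_right)
  then have "1 + (\<Sum>p\<in>P. w p * f p) \<le> (\<Sum>p\<in>P. w p) * v"
    using assms(2) by linarith
  then show ?thesis
    using assms(1) by (simp add: sum_divide_distrib[symmetric] divide_simps mult.commute)
qed

lemma incl_expected_hitting_time_eq_0:
  assumes "\<eta> \<in> U"
  shows "incl_expected_hitting_time S r dN U \<eta> = 0"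
proof -
  define g :: "('a \<Rightarrow> nat) \<Rightarrow> ennreal" where "g \<zeta> = (if \<zeta> \<in> U then 0 else top)" for \<zeta>
  have "incl_hit_step S r dN U g \<le> g"
    by (rule le_funI) (simp add: g_def incl_hit_step_def)
  then have "incl_expected_hitting_time S r dN U \<le> g"
    unfolding incl_expected_hitting_time_def by (rule lfp_lowerbound)
  then show ?thesis using assms by (auto simp: g_def dest: le_funD[of _ _ \<eta>])
qed

lemma incl_hit_step_le_lyapunov:
  fixes V :: "('a \<Rightarrow> nat) \<Rightarrow> real" and g :: "('a \<Rightarrow> nat) \<Rightarrow> ennreal"
  assumes fin: "finite S" and "0 \<le> dN" and "\<And>x y. x \<in> S \<Longrightarrow> y \<in> S \<Longrightarrow> 0 \<le> r x y"
    and V_nonneg: "\<And>\<zeta>. \<zeta> \<in> config_space S N \<Longrightarrow> 0 \<le> V \<zeta>"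
    and g_le: "\<And>\<zeta>. \<zeta> \<in> config_space S N \<Longrightarrow> g \<zeta> \<le> ennreal (V \<zeta>)"
    and \<eta>: "\<eta> \<in> config_space S N" "\<eta> \<notin> U"
    and rate_pos: "0 < incl_total_rate S r dN \<eta>"
    and drift: "1 + (\<Sum>(x, y)\<in>site_pairs S. incl_rate r dN \<eta> x y * (V (move x y \<eta>) - V \<eta>)) \<le> 0"
  shows "incl_hit_step S r dN U g \<eta> \<le> ennreal (V \<eta>)"
proof -
  define rate where "rate p = incl_rate r dN \<eta> (fst p) (snd p)" for p
  define q where "q = (\<Sum>p\<in>site_pairs S. rate p)"
  define V' where "V' p = V (move (fst p) (snd p) \<eta>)" for p
  have q: "0 < q" "incl_total_rate S r dN \<eta> = q"
    using rate_pos by (simp_all add: q_def rate_def incl_total_rate_def split_def)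
  have rate_nonneg: "0 \<le> rate p" if "p \<in> site_pairs S" for p
    using that assms(2,3) by (auto simp: rate_def site_pairs_def intro: incl_rate_nonneg)
  have moves: "move (fst p) (snd p) \<eta> \<in> config_space S N" if "p \<in> site_pairs S" for p
    using move_in_config_space[of \<eta> S N "fst p" "snd p"] \<eta>(1) fin that by simp
  have "incl_hit_step S r dN U g \<eta>
      = inverse (ennreal q) + (\<Sum>p\<in>site_pairs S. ennreal (rate p / q) * g (move (fst p) (snd p) \<eta>))"
    using \<eta>(2) q(2) by (simp add: incl_hit_step_def rate_def split_def)
  also have "\<dots> \<le> ennreal (1 / q) + ennreal (\<Sum>p\<in>site_pairs S. rate p / q * V' p)"
    using q(1) rate_nonneg moves V_nonneg g_le fin
    by (intro add_mono sum_ennreal_mult_le) (auto simp: finite_site_pairs V'_def inverse_ennreal inverse_eq_divide)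
  also have "\<dots> = ennreal (1 / q + (\<Sum>p\<in>site_pairs S. rate p / q * V' p))"
    using q(1) rate_nonneg moves V_nonneg
    by (intro ennreal_plus[symmetric] sum_nonneg) (auto simp: V'_def)
  also have "\<dots> \<le> ennreal (V \<eta>)"
    using first_step_bound_of_drift[of rate "site_pairs S" V' "V \<eta>"] q(1) drift
    by (intro ennreal_leI) (simp add: q_def rate_def V'_def split_def)
  finally show ?thesis .
qed

text \<open>Comparison principle: a nonnegative V whose drift is at most -1 off U is a
  supersolution of the first-step equations, so it dominates their least solution.\<close>

lemma incl_expected_hitting_time_le_lyapunov:
  fixes V :: "('a \<Rightarrow> nat) \<Rightarrow> real"
  assumes fin: "finite S" and dN: "0 \<le> dN" and r_nonneg: "\<And>x y. x \<in> S \<Longrightarrow> y \<in> S \<Longrightarrow> 0 \<le> r x y"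
    and V_nonneg: "\<And>\<zeta>. \<zeta> \<in> config_space S N \<Longrightarrow> 0 \<le> V \<zeta>"
    and rate_pos: "\<And>\<zeta>. \<zeta> \<in> config_space S N - U \<Longrightarrow> 0 < incl_total_rate S r dN \<zeta>"
    and drift: "\<And>\<zeta>. \<zeta> \<in> config_space S N - U \<Longrightarrow>
       1 + (\<Sum>(x, y)\<in>site_pairs S. incl_rate r dN \<zeta> x y * (V (move x y \<zeta>) - V \<zeta>)) \<le> 0"
    and "\<eta> \<in> config_space S N"
  shows "incl_expected_hitting_time S r dN U \<eta> \<le> ennreal (V \<eta>)"
proof -
  define g :: "('a \<Rightarrow> nat) \<Rightarrow> ennreal" where
    "g \<zeta> = (if \<zeta> \<in> U then 0 else if \<zeta> \<in> config_space S N then ennreal (V \<zeta>) else top)" for \<zeta>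
  have g_le: "g \<zeta> \<le> ennreal (V \<zeta>)" if "\<zeta> \<in> config_space S N" for \<zeta>
    using that by (simp add: g_def)
  have "incl_hit_step S r dN U g \<zeta> \<le> g \<zeta>" for \<zeta>
  proof (cases "\<zeta> \<in> config_space S N - U")
    case True
    then have "incl_hit_step S r dN U g \<zeta> \<le> ennreal (V \<zeta>)"
      by (intro incl_hit_step_le_lyapunov[OF fin dN r_nonneg V_nonneg g_le] rate_pos drift) auto
    then show ?thesis using True by (simp add: g_def)
  qed (auto simp: g_def incl_hit_step_def)
  then have "incl_expected_hitting_time S r dN U \<le> g"
    unfolding incl_expected_hitting_time_def by (intro lfp_lowerbound le_funI)
  then show ?thesis using g_le[OF assms(7)] by (metis le_funD order_trans)
qed

section \<open>A finite bound for each number of particles\<close>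

lemma incl_drift_single_site:
  fixes h :: "nat \<Rightarrow> real"
  assumes "finite S" "x0 \<in> S"
  shows "(\<Sum>(x, y)\<in>site_pairs S. incl_rate r dN \<eta> x y * (h (move x y \<eta> x0) - h (\<eta> x0)))
    = (h (\<eta> x0 - 1) - h (\<eta> x0)) * (\<Sum>y\<in>S - {x0}. incl_rate r dN \<eta> x0 y)
      + (h (\<eta> x0 + 1) - h (\<eta> x0)) * (\<Sum>x\<in>S - {x0}. incl_rate r dN \<eta> x x0)"
proof -
  define out where "out y = incl_rate r dN \<eta> x0 y * (h (\<eta> x0 - 1) - h (\<eta> x0))" for y
  define inc where "inc x = incl_rate r dN \<eta> x x0 * (h (\<eta> x0 + 1) - h (\<eta> x0))" for x
  have "(\<Sum>y\<in>S - {x}. incl_rate r dN \<eta> x y * (h (move x y \<eta> x0) - h (\<eta> x0)))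
      = (if x = x0 then \<Sum>y\<in>S - {x0}. out y else inc x)" if "x \<in> S" for x
  proof (cases "x = x0")
    case True
    have "incl_rate r dN \<eta> x0 y * (h (move x0 y \<eta> x0) - h (\<eta> x0)) = out y"
      if "y \<in> S - {x0}" for y
      using that by (auto simp: out_def move_def incl_rate_def)
    then show ?thesis using True by simp
  next
    case False
    then have "(\<Sum>y\<in>S - {x}. incl_rate r dN \<eta> x y * (h (move x y \<eta> x0) - h (\<eta> x0)))
        = (\<Sum>y\<in>S - {x}. if y = x0 then inc x else 0)"
      by (intro sum.cong) (auto simp: inc_def move_def incl_rate_def)
    then show ?thesis using False assms by simp
  qed
  then have "(\<Sum>(x, y)\<in>site_pairs S. incl_rate r dN \<eta> x y * (h (move x y \<eta> x0) - h (\<eta> x0)))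
      = (\<Sum>x\<in>S. if x = x0 then \<Sum>y\<in>S - {x0}. out y else inc x)"
    using assms(1) by (simp add: sum_site_pairs)
  also have "\<dots> = (\<Sum>y\<in>S - {x0}. out y) + (\<Sum>x\<in>S - {x0}. inc x)"
    using assms by (simp add: sum.remove[of S x0])
  finally show ?thesis by (simp add: out_def inc_def sum_distrib_left mult.commute)
qed

lemma geometric_lyapunov_drift:
  fixes c Q Pout Pin :: real and k N :: nat
  defines "\<theta> \<equiv> c / (2 * (Q + c))"
  defines "B \<equiv> 4 / (\<theta> ^ N * c)"
  defines "h \<equiv> \<lambda>j. B * (1 - \<theta> ^ j)"
  assumes "0 < c" "c \<le> Pout" "0 \<le> Pin" "Pin \<le> Q" "1 \<le> k" "k \<le> N"
  shows "(h (k - 1) - h k) * Pout + (h (k + 1) - h k) * Pin \<le> -1"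
proof -
  have \<theta>: "0 < \<theta>" "\<theta> \<le> 1 / 2" "\<theta> * Q \<le> c / 2"
    using assms(4-7) by (auto simp: \<theta>_def field_simps)
  have B: "0 < B" using \<theta>(1) assms(4) by (simp add: B_def)
  have power_k: "\<theta> ^ k = \<theta> * \<theta> ^ (k - 1)"
    using assms(8) by (metis Suc_diff_1 less_le_trans power_Suc zero_less_one)
  have "(h (k - 1) - h k) * Pout + (h (k + 1) - h k) * Pin
      = B * (1 - \<theta>) * \<theta> ^ (k - 1) * (\<theta> * Pin - Pout)"
    by (simp add: h_def power_k algebra_simps)
  also have "\<dots> \<le> B * (1 - \<theta>) * \<theta> ^ (k - 1) * (- (c / 2))"
  proof (rule mult_left_mono)
    have "\<theta> * Pin \<le> \<theta> * Q" using \<theta>(1) assms(7) by (intro mult_left_mono) auto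
    then show "\<theta> * Pin - Pout \<le> - (c / 2)" using \<theta>(3) assms(5) by linarith
  qed (use \<theta> B in simp)
  also have "\<dots> \<le> B * (1 / 2) * \<theta> ^ N * (- (c / 2))"
  proof -
    have "\<theta> ^ N \<le> \<theta> ^ (k - 1)" using \<theta> assms(9) by (intro power_decreasing) auto
    then have "B * (1 / 2) * \<theta> ^ N \<le> B * (1 - \<theta>) * \<theta> ^ (k - 1)"
      using B \<theta> by (intro mult_mono) auto
    then show ?thesis using assms(4) by (intro mult_right_mono_neg) auto
  qed
  also have "\<dots> = -1" using \<theta>(1) assms(4) by (simp add: B_def field_simps)
  finally show ?thesis .
qed

lemma incl_rates_at_site_bounds:
  assumes fin: "finite S" and dN: "0 < dN"
    and r_nonneg: "\<And>x y. x \<in> S \<Longrightarrow> y \<in> S \<Longrightarrow> 0 \<le> r x y"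
    and pair: "(x0, y1) \<in> site_pairs S"
    and \<zeta>: "\<zeta> \<in> config_space S N" "1 \<le> \<zeta> x0"
  shows "dN * r x0 y1 \<le> (\<Sum>y\<in>S - {x0}. incl_rate r dN \<zeta> x0 y)"
    and "0 \<le> (\<Sum>x\<in>S - {x0}. incl_rate r dN \<zeta> x x0)"
    and "(\<Sum>x\<in>S - {x0}. incl_rate r dN \<zeta> x x0) \<le> real N * (dN + real N) * (\<Sum>x\<in>S - {x0}. r x x0)"
proof -
  have x0: "x0 \<in> S" using pair by (simp add: site_pairs_def)
  have rates_nonneg: "0 \<le> incl_rate r dN \<zeta> x y" if "x \<in> S" "y \<in> S" for x y
    using that dN r_nonneg by (simp add: incl_rate_nonneg)
  have "1 * dN \<le> real (\<zeta> x0) * (dN + real (\<zeta> y1))"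
    using \<zeta>(2) dN by (intro mult_mono) auto
  then have "dN * r x0 y1 \<le> incl_rate r dN \<zeta> x0 y1"
    using pair r_nonneg by (auto simp: incl_rate_def site_pairs_def intro: mult_right_mono)
  also have "\<dots> \<le> (\<Sum>y\<in>S - {x0}. incl_rate r dN \<zeta> x0 y)"
    using pair fin rates_nonneg by (intro member_le_sum) (auto simp: site_pairs_def)
  finally show "dN * r x0 y1 \<le> (\<Sum>y\<in>S - {x0}. incl_rate r dN \<zeta> x0 y)" .
  show "0 \<le> (\<Sum>x\<in>S - {x0}. incl_rate r dN \<zeta> x x0)"
    using rates_nonneg x0 by (auto intro: sum_nonneg)
  have "incl_rate r dN \<zeta> x x0 \<le> real N * (dN + real N) * r x x0" if "x \<in> S" for x
    unfolding incl_rate_def using config_space_le[OF \<zeta>(1) fin] that x0 dN r_nonneg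
    by (intro mult_right_mono mult_mono) auto
  then show "(\<Sum>x\<in>S - {x0}. incl_rate r dN \<zeta> x x0) \<le> real N * (dN + real N) * (\<Sum>x\<in>S - {x0}. r x x0)"
    by (auto simp: sum_distrib_left intro: sum_mono)
qed

lemma incl_expected_hitting_time_bounded:
  assumes fin: "finite S" and dN: "0 < dN"
    and r_nonneg: "\<And>x y. x \<in> S \<Longrightarrow> y \<in> S \<Longrightarrow> 0 \<le> r x y"
    and pair: "(x0, y1) \<in> site_pairs S" "0 < r x0 y1"
    and occupied: "\<And>\<zeta>. \<zeta> \<in> config_space S N - U \<Longrightarrow> 1 \<le> \<zeta> x0"
  shows "\<exists>B. \<forall>\<eta>\<in>config_space S N. incl_expected_hitting_time S r dN U \<eta> \<le> ennreal B"
proof -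
  define c where "c = dN * r x0 y1"
  define Q where "Q = real N * (dN + real N) * (\<Sum>x\<in>S - {x0}. r x x0)"
  define \<theta> where "\<theta> = c / (2 * (Q + c))"
  define B where "B = 4 / (\<theta> ^ N * c)"
  define V where "V \<zeta> = B * (1 - \<theta> ^ \<zeta> x0)" for \<zeta> :: "'a \<Rightarrow> nat"
  have x0: "x0 \<in> S" using pair by (simp add: site_pairs_def)
  have c: "0 < c" using dN pair(2) by (simp add: c_def)
  have Q: "0 \<le> Q" using r_nonneg x0 dN by (auto simp: Q_def intro!: mult_nonneg_nonneg sum_nonneg)
  have \<theta>: "0 < \<theta>" "\<theta> \<le> 1" using c Q by (auto simp: \<theta>_def field_simps)
  have B: "0 < B" using \<theta> c by (simp add: B_def)
  have V_bounds: "0 \<le> V \<zeta>" "V \<zeta> \<le> B" for \<zeta>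
    using \<theta> B by (auto simp: V_def power_le_one algebra_simps)
  have rate_pos: "0 < incl_total_rate S r dN \<zeta>" if "\<zeta> \<in> config_space S N - U" for \<zeta>
    using incl_total_rate_pos[of S dN r x0 y1 \<zeta>, OF fin dN r_nonneg pair occupied[OF that]] .
  have drift: "1 + (\<Sum>(x, y)\<in>site_pairs S. incl_rate r dN \<zeta> x y * (V (move x y \<zeta>) - V \<zeta>)) \<le> 0"
    if \<zeta>: "\<zeta> \<in> config_space S N - U" for \<zeta>
  proof -
    define Pout where "Pout = (\<Sum>y\<in>S - {x0}. incl_rate r dN \<zeta> x0 y)"
    define Pin where "Pin = (\<Sum>x\<in>S - {x0}. incl_rate r dN \<zeta> x x0)"
    have "c \<le> Pout" "0 \<le> Pin" "Pin \<le> Q"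
      using incl_rates_at_site_bounds[where \<zeta> = \<zeta> and N = N, OF fin dN r_nonneg pair(1)]
        \<zeta> occupied[OF \<zeta>] by (simp_all add: c_def Q_def Pout_def Pin_def)
    moreover have "\<zeta> x0 \<le> N" using config_space_le[of \<zeta> S N x0] \<zeta> fin by simp
    ultimately show ?thesis
      using incl_drift_single_site[OF fin x0, of r dN \<zeta> "\<lambda>j. B * (1 - \<theta> ^ j)"]
        geometric_lyapunov_drift[OF c _ _ _ occupied[OF \<zeta>], of Pout Pin Q N]
      by (simp add: V_def Pout_def Pin_def \<theta>_def B_def split_def)
  qed
  have "incl_expected_hitting_time S r dN U \<eta> \<le> ennreal B" if "\<eta> \<in> config_space S N" for \<eta>
    using incl_expected_hitting_time_le_lyapunov[where U = U and V = V,
        OF fin _ r_nonneg V_bounds(1) rate_pos drift that] V_bounds(2)[of \<eta>] dN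
    by (meson ennreal_leI less_imp_le order_trans)
  then show ?thesis by blast
qed

section \<open>The logarithmic Lyapunov function\<close>

lemma ln_one_minus_le:
  fixes t :: real
  assumes "0 \<le> t" "t \<le> 1 / 2"
  shows "ln (1 - t) \<le> - t - t\<^sup>2 / 4"
proof -
  define w where "w = 1 - t / 2 - t\<^sup>2 / 8"
  have "t\<^sup>2 \<le> t" using assms by (simp add: power2_eq_square mult_left_le)
  then have w: "0 < w" using assms by (simp add: w_def)
  have "w\<^sup>2 = 1 - t + t ^ 3 / 8 + t ^ 4 / 64"
    by (simp add: w_def power2_eq_square power3_eq_cube power4_eq_xxxx algebra_simps)
  then have "1 - t \<le> w\<^sup>2" using assms by simp
  then have "ln (1 - t) \<le> ln (w\<^sup>2)" using assms w by (subst ln_le_cancel_iff) auto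
  also have "\<dots> = 2 * ln w" using w by (simp add: ln_realpow)
  also have "\<dots> \<le> 2 * (w - 1)" using ln_le_minus_one[OF w] by simp
  also have "\<dots> = - t - t\<^sup>2 / 4" by (simp add: w_def algebra_simps)
  finally show ?thesis .
qed

lemma ln_diff_pred_le:
  fixes u :: real
  assumes "2 \<le> u"
  shows "ln (u - 1) - ln u \<le> - 1 / u - 1 / (4 * u\<^sup>2)"
proof -
  have "ln (u - 1) - ln u = ln ((u - 1) / u)" using assms by (simp add: ln_divide_pos)
  also have "\<dots> = ln (1 - 1 / u)" using assms by (simp add: diff_divide_distrib)
  also have "\<dots> \<le> - (1 / u) - (1 / u)\<^sup>2 / 4"
    using assms by (intro ln_one_minus_le) auto
  finally show ?thesis by (simp add: power_divide)
qed

lemma ln_diff_succ_le: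
  fixes u :: real
  assumes "0 < u"
  shows "ln (u + 1) - ln u \<le> 1 / u"
proof -
  have "ln (u + 1) - ln u = ln ((u + 1) / u)" using assms by (simp add: ln_divide_pos)
  also have "\<dots> = ln (1 + 1 / u)" using assms by (simp add: add_divide_distrib)
  also have "\<dots> \<le> 1 / u" using assms by (intro ln_add_one_self_le_self) simp
  finally show ?thesis .
qed

lemma log_drift_pair_bound:
  fixes u v a b d \<rho> l N :: real
  assumes "2 \<le> l" "l < u" "l < v" "u \<le> N" "v \<le> N" "0 \<le> a" "0 \<le> b" "b \<le> 1" "0 < d" "0 \<le> \<rho>"
  shows "u * (d + v) * \<rho> * (b / v - a / u - a / (4 * u\<^sup>2))
     \<le> \<rho> * u * b - \<rho> * v * a + d * \<rho> * N / l - \<rho> * a * l / (4 * N)"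
proof -
  have pos: "0 < u" "0 < v" "0 < N" "0 < l" using assms by auto
  have expand: "u * (d + v) * \<rho> * (b / v - a / u - a / (4 * u\<^sup>2))
     = \<rho> * u * b + d * \<rho> * (u * b / v) - \<rho> * a * d - \<rho> * v * a - \<rho> * a * ((d + v) / (4 * u))"
    using pos by (simp add: field_simps power2_eq_square)
  have "u * b / v \<le> N / l"
  proof -
    have "u * b \<le> N * 1" using assms pos by (intro mult_mono) auto
    then have "u * b / v \<le> N / v" using pos by (simp add: divide_right_mono)
    also have "\<dots> \<le> N / l" using pos assms by (intro divide_left_mono) auto
    finally show ?thesis .
  qed
  then have "d * \<rho> * (u * b / v) \<le> d * \<rho> * (N / l)" using assms by (intro mult_left_mono) auto
  moreover have "l / (4 * N) \<le> (d + v) / (4 * u)"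
    using pos assms by (intro frac_le) auto
  then have "\<rho> * a * (l / (4 * N)) \<le> \<rho> * a * ((d + v) / (4 * u))"
    using assms by (intro mult_left_mono) auto
  moreover have "0 \<le> \<rho> * a * d" using assms by auto
  ultimately show ?thesis unfolding expand by simp
qed

definition log_weight :: "('a \<Rightarrow> real) \<Rightarrow> 'a set \<Rightarrow> ('a \<Rightarrow> nat) \<Rightarrow> real" where
  "log_weight m S \<eta> = (\<Sum>x\<in>S. m x * ln (real (\<eta> x)))"

lemma log_weight_move_diff:
  assumes "finite S" "(x, y) \<in> site_pairs S" "1 \<le> \<eta> x"
  shows "log_weight m S (move x y \<eta>) - log_weight m S \<eta>
    = m x * (ln (real (\<eta> x) - 1) - ln (\<eta> x)) + m y * (ln (real (\<eta> y) + 1) - ln (\<eta> y))"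
proof -
  have xy: "x \<in> S" "y \<in> S" "x \<noteq> y" using assms(2) by (auto simp: site_pairs_def)
  have "log_weight m S (move x y \<eta>) - log_weight m S \<eta>
      = (\<Sum>z\<in>S. m z * (ln (move x y \<eta> z) - ln (\<eta> z)))"
    by (simp add: log_weight_def sum_subtractf right_diff_distrib)
  also have "\<dots> = (\<Sum>z\<in>S. (if z = x then m x * (ln (real (\<eta> x) - 1) - ln (\<eta> x)) else 0)
      + (if z = y then m y * (ln (real (\<eta> y) + 1) - ln (\<eta> y)) else 0))"
    using assms(3) xy(3) by (intro sum.cong) (auto simp: move_def of_nat_diff)
  finally show ?thesis using assms(1) xy by (simp add: sum.distrib)
qed

lemma incl_rate_log_weight_diff_le:
  fixes N :: nat and dN l :: real
  assumes "finite S" "(x, y) \<in> site_pairs S" "0 < dN" "0 \<le> r x y"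
    and "2 \<le> l" "l < \<eta> x" "l < \<eta> y" "\<eta> x \<le> N" "\<eta> y \<le> N" "0 \<le> m x" "0 \<le> m y" "m y \<le> 1"
  shows "incl_rate r dN \<eta> x y * (log_weight m S (move x y \<eta>) - log_weight m S \<eta>)
    \<le> r x y * \<eta> x * m y - r x y * \<eta> y * m x + dN * r x y * N / l - r x y * m x * l / (4 * real N)"
proof -
  have "1 \<le> real (\<eta> x)" using assms(5,6) by linarith
  then have "1 \<le> \<eta> x" by simp
  have "log_weight m S (move x y \<eta>) - log_weight m S \<eta>
      \<le> m x * (- 1 / \<eta> x - 1 / (4 * (real (\<eta> x))\<^sup>2)) + m y * (1 / \<eta> y)"
    unfolding log_weight_move_diff[where \<eta> = \<eta>, OF assms(1,2) \<open>1 \<le> \<eta> x\<close>]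
    using assms(5-7,10,11) ln_diff_pred_le[of "\<eta> x"] ln_diff_succ_le[of "\<eta> y"]
    by (intro add_mono mult_left_mono) auto
  then have "incl_rate r dN \<eta> x y * (log_weight m S (move x y \<eta>) - log_weight m S \<eta>)
      \<le> \<eta> x * (dN + \<eta> y) * r x y * (m y / \<eta> y - m x / \<eta> x - m x / (4 * (real (\<eta> x))\<^sup>2))"
    using assms(3,4) unfolding incl_rate_def by (intro mult_left_mono) (auto simp: algebra_simps)
  also have "\<dots> \<le> r x y * \<eta> x * m y - r x y * \<eta> y * m x + dN * r x y * N / l - r x y * m x * l / (4 * real N)"
    using log_drift_pair_bound[of l "\<eta> x" "\<eta> y" N "m x" "m y" dN "r x y"] assms by auto
  finally show ?thesis .
qed

lemma skew_weighted_pair_sum_nonpos: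
  fixes r :: "'a \<Rightarrow> 'a \<Rightarrow> real"
  assumes "finite S" "\<forall>x\<in>S. (\<Sum>y\<in>S. (r x y - r y x) * m y) \<le> 0" "\<forall>x\<in>S. 0 \<le> e x"
  shows "(\<Sum>(x, y)\<in>site_pairs S. r x y * e x * m y - r x y * e y * m x) \<le> 0"
proof -
  have "(\<Sum>(x, y)\<in>site_pairs S. r x y * e x * m y - r x y * e y * m x)
      = (\<Sum>x\<in>S. \<Sum>y\<in>S. r x y * e x * m y - r x y * e y * m x)"
    using assms(1) by (simp add: sum_site_pairs sum_diff1)
  also have "\<dots> = (\<Sum>x\<in>S. \<Sum>y\<in>S. r x y * e x * m y) - (\<Sum>x\<in>S. \<Sum>y\<in>S. r x y * e y * m x)"
    by (simp add: sum_subtractf)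
  also have "(\<Sum>x\<in>S. \<Sum>y\<in>S. r x y * e y * m x) = (\<Sum>y\<in>S. \<Sum>x\<in>S. r x y * e y * m x)"
    by (rule sum.swap)
  also have "(\<Sum>x\<in>S. \<Sum>y\<in>S. r x y * e x * m y) - (\<Sum>y\<in>S. \<Sum>x\<in>S. r x y * e y * m x)
      = (\<Sum>x\<in>S. e x * (\<Sum>y\<in>S. (r x y - r y x) * m y))"
    unfolding sum_subtractf[symmetric] sum_distrib_left by (intro sum.cong refl) (simp add: algebra_simps)
  also have "\<dots> \<le> 0"
    using assms(2,3) by (intro sum_nonpos) (simp add: mult_nonneg_nonpos)
  finally show ?thesis .
qed

lemma sum_site_pairs_weighted_rate_ge:
  fixes r :: "'a \<Rightarrow> 'a \<Rightarrow> real"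
  assumes "finite S" "2 \<le> card S" "\<And>x y. x \<in> S \<Longrightarrow> y \<in> S \<Longrightarrow> x \<noteq> y \<Longrightarrow> rmin \<le> r x y"
    and "0 < rmin" "\<forall>y\<in>S. 0 \<le> m y" "(\<Sum>y\<in>S. m y) = 1"
  shows "rmin \<le> (\<Sum>(x, y)\<in>site_pairs S. r x y * m x)"
proof -
  have "rmin * m x \<le> (\<Sum>y\<in>S - {x}. r x y * m x)" if x: "x \<in> S" for x
  proof -
    have "1 \<le> card (S - {x})" using assms(1,2) x by simp
    then obtain y where y: "y \<in> S - {x}" by (cases "S - {x} = {}") auto
    have "rmin * m x \<le> r x y * m x" using assms(3,5) x y by (intro mult_right_mono) auto
    also have "\<dots> \<le> (\<Sum>y\<in>S - {x}. r x y * m x)"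
    proof (rule member_le_sum)
      fix z assume "z \<in> S - {x} - {y}"
      then have "rmin \<le> r x z" using assms(3) x by auto
      then show "0 \<le> r x z * m x" using assms(4,5) x by simp
    qed (use assms(1) y in auto)
    finally show ?thesis .
  qed
  then have "(\<Sum>x\<in>S. rmin * m x) \<le> (\<Sum>(x, y)\<in>site_pairs S. r x y * m x)"
    using assms(1) by (simp add: sum_site_pairs sum_mono)
  then show ?thesis using assms(6) by (simp add: sum_distrib_left[symmetric])
qed

lemma log_weight_drift_le:
  fixes N :: nat and r :: "'a \<Rightarrow> 'a \<Rightarrow> real" and dN l rmin :: real
  assumes fin: "finite S" and card: "2 \<le> card S" and dN: "0 < dN"
    and r_nonneg: "\<And>x y. x \<in> S \<Longrightarrow> y \<in> S \<Longrightarrow> 0 \<le> r x y"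
    and rmin: "\<And>x y. x \<in> S \<Longrightarrow> y \<in> S \<Longrightarrow> x \<noteq> y \<Longrightarrow> rmin \<le> r x y" "0 < rmin"
    and m: "\<forall>y\<in>S. 0 \<le> m y" "(\<Sum>y\<in>S. m y) = 1" "\<forall>x\<in>S. (\<Sum>y\<in>S. (r x y - r y x) * m y) \<le> 0"
    and l: "2 \<le> l" "l \<le> N"
    and small_d: "dN * N * (\<Sum>(x, y)\<in>site_pairs S. r x y) / l \<le> rmin * l / (8 * real N)"
    and \<eta>: "\<eta> \<in> config_space S N" "\<forall>x\<in>S. l < \<eta> x"
  shows "(\<Sum>(x, y)\<in>site_pairs S.
      incl_rate r dN \<eta> x y * (log_weight m S (move x y \<eta>) - log_weight m S \<eta>)) \<le> - (rmin * l / (8 * real N))"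
proof -
  have m_le_1: "m y \<le> 1" if "y \<in> S" for y
    using member_le_sum[of y S m] m(1,2) that fin by auto
  have "(\<Sum>(x, y)\<in>site_pairs S.
        incl_rate r dN \<eta> x y * (log_weight m S (move x y \<eta>) - log_weight m S \<eta>))
      \<le> (\<Sum>(x, y)\<in>site_pairs S. r x y * \<eta> x * m y - r x y * \<eta> y * m x
            + dN * r x y * N / l - r x y * m x * l / (4 * real N))"
    using \<eta> config_space_le[OF \<eta>(1) fin] fin dN l(1) r_nonneg m(1) m_le_1
    by (intro sum_mono) (auto simp: site_pairs_def intro!: incl_rate_log_weight_diff_le)
  also have "\<dots> = (\<Sum>(x, y)\<in>site_pairs S. r x y * \<eta> x * m y - r x y * \<eta> y * m x)
      + dN * N * (\<Sum>(x, y)\<in>site_pairs S. r x y) / l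
      - (\<Sum>(x, y)\<in>site_pairs S. r x y * m x) * l / (4 * real N)"
    by (simp add: sum.distrib sum_subtractf sum_distrib_left sum_distrib_right sum_divide_distrib
        case_prod_beta algebra_simps)
  also have "\<dots> \<le> 0 + rmin * l / (8 * real N) - rmin * l / (4 * real N)"
    using skew_weighted_pair_sum_nonpos[OF fin m(3), of "\<lambda>x. real (\<eta> x)"] small_d
      sum_site_pairs_weighted_rate_ge[OF fin card rmin m(1,2)] l
    by (intro diff_mono add_mono divide_right_mono mult_right_mono) auto
  also have "\<dots> = - (rmin * l / (8 * real N))" by (simp add: field_simps)
  finally show ?thesis .
qed

lemma log_weight_le_ln:
  assumes "finite S" "\<zeta> \<in> config_space S N" "0 < N" "\<forall>y\<in>S. 0 \<le> m y" "(\<Sum>y\<in>S. m y) = 1"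
  shows "log_weight m S \<zeta> \<le> ln N"
proof -
  have "ln (\<zeta> x) \<le> ln N" for x
    using config_space_le[OF assms(2,1), of x] assms(3) by (cases "\<zeta> x = 0") auto
  then have "log_weight m S \<zeta> \<le> (\<Sum>x\<in>S. m x * ln N)"
    unfolding log_weight_def using assms(4) by (intro sum_mono mult_left_mono) auto
  then show ?thesis using assms(5) by (simp add: sum_distrib_right[symmetric])
qed

lemma ln_le_log_weight:
  assumes "0 < a" "\<forall>x\<in>S. a \<le> \<zeta> x" "\<forall>y\<in>S. 0 \<le> m y" "(\<Sum>y\<in>S. m y) = 1"
  shows "ln a \<le> log_weight m S \<zeta>"
proof -
  have "(\<Sum>x\<in>S. m x * ln a) \<le> log_weight m S \<zeta>"
    unfolding log_weight_def using assms(1-3) by (intro sum_mono mult_left_mono) auto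
  then show ?thesis using assms(4) by (simp add: sum_distrib_right[symmetric])
qed

lemma incl_expected_hitting_time_le_log:
  fixes N :: nat and r :: "'a \<Rightarrow> 'a \<Rightarrow> real" and dN l rmin :: real
  assumes fin: "finite S" and card: "2 \<le> card S" and dN: "0 < dN"
    and r_nonneg: "\<And>x y. x \<in> S \<Longrightarrow> y \<in> S \<Longrightarrow> 0 \<le> r x y"
    and rmin: "\<And>x y. x \<in> S \<Longrightarrow> y \<in> S \<Longrightarrow> x \<noteq> y \<Longrightarrow> rmin \<le> r x y" "0 < rmin"
    and m: "\<forall>y\<in>S. 0 \<le> m y" "(\<Sum>y\<in>S. m y) = 1" "\<forall>x\<in>S. (\<Sum>y\<in>S. (r x y - r y x) * m y) \<le> 0"
    and l: "2 \<le> l" "l \<le> N"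
    and small_d: "dN * N * (\<Sum>(x, y)\<in>site_pairs S. r x y) / l \<le> rmin * l / (8 * real N)"
    and crowded: "\<And>\<zeta>. \<zeta> \<in> config_space S N - U \<Longrightarrow> \<forall>x\<in>S. l < \<zeta> x"
    and \<eta>: "\<eta> \<in> config_space S N"
  shows "incl_expected_hitting_time S r dN U \<eta> \<le> ennreal (8 * real N * ln N / (rmin * l))"
proof -
  txt \<open>Off U every site holds more than l particles, so after one jump at least l - 1 remain
    everywhere and the truncation at 0 in V is inactive.\<close>
  define K where "K = 8 * N / (rmin * l)"
  define V where "V \<zeta> = max 0 (K * (log_weight m S \<zeta> - ln (l - 1)))" for \<zeta>
  have K: "0 < K" using l rmin(2) by (simp add: K_def)
  have V_eq: "V \<zeta> = K * (log_weight m S \<zeta> - ln (l - 1))" if "\<forall>x\<in>S. l - 1 \<le> \<zeta> x" for \<zeta>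
    using ln_le_log_weight[of "l - 1" S \<zeta> m] that l(1) m(1,2) K by (simp add: V_def)
  have "0 \<le> ln (l - 1)" using l(1) by simp
  have V_le: "V \<zeta> \<le> K * ln N" if "\<zeta> \<in> config_space S N" for \<zeta>
  proof -
    have "0 < N" using l by simp
    from log_weight_le_ln[OF fin that this m(1,2)] \<open>0 \<le> ln (l - 1)\<close>
    have "log_weight m S \<zeta> - ln (l - 1) \<le> ln N" by linarith
    moreover have "0 \<le> ln (real N)" using l by simp
    ultimately show ?thesis using K by (simp add: V_def)
  qed
  have rate_pos: "0 < incl_total_rate S r dN \<zeta>" if "\<zeta> \<in> config_space S N - U" for \<zeta>
    using crowded[OF that] l(1) rmin
    by (intro incl_total_rate_pos_of_occupied[OF fin card dN r_nonneg]) (force intro: less_le_trans)+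
  have drift: "1 + (\<Sum>(x, y)\<in>site_pairs S. incl_rate r dN \<zeta> x y * (V (move x y \<zeta>) - V \<zeta>)) \<le> 0"
    if \<zeta>: "\<zeta> \<in> config_space S N - U" for \<zeta>
  proof -
    have pair_eq: "incl_rate r dN \<zeta> x y * (V (move x y \<zeta>) - V \<zeta>)
        = K * (incl_rate r dN \<zeta> x y * (log_weight m S (move x y \<zeta>) - log_weight m S \<zeta>))"
      if "(x, y) \<in> site_pairs S" for x y
    proof -
      have "\<forall>z\<in>S. l - 1 \<le> move x y \<zeta> z" "\<forall>z\<in>S. l - 1 \<le> \<zeta> z"
        using crowded[OF \<zeta>] by (auto simp: move_def of_nat_diff)
      then show ?thesis by (simp add: V_eq algebra_simps)
    qed
    have "(\<Sum>(x, y)\<in>site_pairs S. incl_rate r dN \<zeta> x y * (V (move x y \<zeta>) - V \<zeta>))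
        = K * (\<Sum>(x, y)\<in>site_pairs S.
            incl_rate r dN \<zeta> x y * (log_weight m S (move x y \<zeta>) - log_weight m S \<zeta>))"
      unfolding sum_distrib_left using pair_eq by (intro sum.cong refl) (auto simp: split_def)
    also have "\<dots> \<le> K * - (rmin * l / (8 * real N))"
      using log_weight_drift_le[OF fin card dN r_nonneg rmin m l small_d] \<zeta> crowded[OF \<zeta>] K
      by (intro mult_left_mono) auto
    also have "\<dots> = -1" using l rmin(2) by (simp add: K_def field_simps)
    finally show ?thesis by simp
  qed
  have "incl_expected_hitting_time S r dN U \<eta> \<le> ennreal (V \<eta>)"
    using incl_expected_hitting_time_le_lyapunov[where U = U and V = V,
        OF fin _ r_nonneg _ rate_pos drift \<eta>] dN by (simp add: V_def)
  also have "\<dots> \<le> ennreal (8 * real N * ln N / (rmin * l))"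
    using V_le[OF \<eta>] by (intro ennreal_leI) (simp add: K_def)
  finally show ?thesis .
qed

section \<open>Linear growth in the number of particles\<close>

lemma ex_pos_rate_lower_bound:
  fixes r :: "'a \<Rightarrow> 'a \<Rightarrow> real"
  assumes "finite S" "\<And>x y. x \<in> S \<Longrightarrow> y \<in> S \<Longrightarrow> x \<noteq> y \<Longrightarrow> 0 < r x y"
  shows "\<exists>rmin>0. \<forall>x\<in>S. \<forall>y\<in>S. x \<noteq> y \<longrightarrow> rmin \<le> r x y"
proof -
  define R where "R = insert 1 ((\<lambda>(x, y). r x y) ` site_pairs S)"
  have "finite R" using assms(1) by (simp add: R_def finite_site_pairs)
  moreover have "\<forall>t\<in>R. 0 < t" using assms(2) by (auto simp: R_def site_pairs_def)
  ultimately have "0 < Min R" by (simp add: R_def)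
  moreover have "Min R \<le> r x y" if "x \<in> S" "y \<in> S" "x \<noteq> y" for x y
    using \<open>finite R\<close> that by (intro Min_le) (auto simp: R_def site_pairs_def)
  ultimately show ?thesis by blast
qed

lemma ennreal_linear_bound_of_eventually:
  fixes f :: "nat \<Rightarrow> ennreal" and c :: real
  assumes "f 0 = 0" "\<And>N. \<exists>B. f N \<le> ennreal B"
    and "eventually (\<lambda>N. f N \<le> ennreal (c * real N)) sequentially"
  shows "\<exists>C>0. \<forall>N. f N \<le> ennreal (C * real N)"
proof -
  obtain B where B: "\<And>N. f N \<le> ennreal (max 0 (B N))"
    using assms(2) by (metis ennreal_max_0)
  obtain N0 where N0: "\<And>N. N0 \<le> N \<Longrightarrow> f N \<le> ennreal (c * real N)"
    using assms(3) by (auto simp: eventually_sequentially)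
  define C where "C = max c 1 + (\<Sum>n<N0. max 0 (B n))"
  have "0 \<le> (\<Sum>n<N0. max 0 (B n))" by (intro sum_nonneg) auto
  then have C: "max c 1 \<le> C" by (simp add: C_def)
  have "f N \<le> ennreal (C * real N)" for N
  proof -
    consider "N = 0" | "0 < N" "N < N0" | "N0 \<le> N" by linarith
    then show ?thesis
    proof cases
      case 2
      have "max 0 (B N) \<le> (\<Sum>n<N0. max 0 (B n))" using 2 by (intro member_le_sum) auto
      also have "\<dots> \<le> C * 1" by (simp add: C_def)
      also have "\<dots> \<le> C * real N" using 2 C by (intro mult_left_mono) auto
      finally show ?thesis using B[of N] by (meson ennreal_leI order_trans)
    next
      case 3
      have "c * real N \<le> C * real N" using C by (intro mult_right_mono) auto
      then show ?thesis using N0[OF 3] by (meson ennreal_leI order_trans)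
    qed (simp add: assms(1))
  qed
  moreover have "0 < C" using C by linarith
  ultimately show ?thesis by blast
qed

lemma eventually_log_window:
  fixes d :: "nat \<Rightarrow> real" and \<delta> \<kappa> R :: real
  assumes d: "(\<lambda>N. d N * real N ^ 2 / (ln (real N)) ^ 2) \<longlonglongrightarrow> 0"
    and "0 < \<delta>" "0 < \<kappa>" "0 \<le> R"
  shows "eventually (\<lambda>N. 2 \<le> \<delta> * ln N \<and> \<delta> * ln N \<le> N
      \<and> d N * N * R / (\<delta> * ln N) \<le> \<kappa> * (\<delta> * ln N) / (8 * real N)) sequentially"
proof -
  have "eventually (\<lambda>N. ln (real N) / real N < 1 / \<delta>) sequentially"
    by (rule order_tendstoD(2)[OF lim_ln_over_n]) (use assms in simp)
  moreover have "eventually (\<lambda>N. 1 / ln (real N) < \<delta> / 2) sequentially"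
    by (rule order_tendstoD(2)[OF lim_1_over_ln]) (use assms in simp)
  moreover have "eventually (\<lambda>N. d N * real N ^ 2 / (ln (real N)) ^ 2 < \<kappa> * \<delta>\<^sup>2 / (8 * (R + 1))) sequentially"
    by (rule order_tendstoD(2)[OF d]) (use assms in simp)
  moreover have "eventually (\<lambda>N. 2 \<le> N) sequentially" by (rule eventually_ge_at_top)
  ultimately show ?thesis
  proof eventually_elim
    case (elim N)
    define l where "l = \<delta> * ln N"
    have lnN: "0 < ln (real N)" and N: "0 < real N" using elim(4) by auto
    have l: "2 \<le> l" "l \<le> N"
      using elim(1,2) lnN N assms(2) by (simp_all add: l_def divide_less_eq field_simps)
    have "d N * N\<^sup>2 < \<kappa> * \<delta>\<^sup>2 / (8 * (R + 1)) * (ln N)\<^sup>2"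
      using elim(3) lnN by (simp add: divide_less_eq)
    then have "8 * (d N * N\<^sup>2) * R \<le> 8 * (\<kappa> * \<delta>\<^sup>2 / (8 * (R + 1)) * (ln N)\<^sup>2) * R"
      using assms(4) by (intro mult_right_mono) auto
    also have "\<dots> = \<kappa> * l\<^sup>2 * (R / (R + 1))"
      using assms(4) by (simp add: l_def field_simps power_mult_distrib)
    also have "\<dots> \<le> \<kappa> * l\<^sup>2"
      using assms(3,4) by (intro mult_left_le) auto
    finally have "d N * N * R / l \<le> \<kappa> * l / (8 * real N)"
      using l by (simp add: field_simps power2_eq_square)
    with l show ?case by (simp add: l_def)
  qed
qed

lemma eventually_incl_expected_hitting_time_le_linear:
  fixes r :: "'a \<Rightarrow> 'a \<Rightarrow> real" and d :: "nat \<Rightarrow> real" and \<delta> :: real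
  assumes fin: "finite S" and card: "2 \<le> card S"
    and r_nonneg: "\<And>x y. x \<in> S \<Longrightarrow> y \<in> S \<Longrightarrow> 0 \<le> r x y"
    and r_pos: "\<And>x y. x \<in> S \<Longrightarrow> y \<in> S \<Longrightarrow> x \<noteq> y \<Longrightarrow> 0 < r x y"
    and d: "\<And>N. 0 < d N" "(\<lambda>N. d N * real N ^ 2 / (ln (real N)) ^ 2) \<longlonglongrightarrow> 0"
    and \<delta>: "0 < \<delta>"
    and crowded: "\<And>N \<zeta>. \<zeta> \<in> config_space S N - U N \<Longrightarrow> \<forall>x\<in>S. \<delta> * ln N < \<zeta> x"
  shows "\<exists>c. eventually (\<lambda>N. \<forall>\<eta>\<in>config_space S N.
      incl_expected_hitting_time S r (d N) (U N) \<eta> \<le> ennreal (c * real N)) sequentially"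
proof -
  obtain rmin where rmin: "\<And>x y. x \<in> S \<Longrightarrow> y \<in> S \<Longrightarrow> x \<noteq> y \<Longrightarrow> rmin \<le> r x y" "0 < rmin"
    using ex_pos_rate_lower_bound[of S r, OF fin r_pos] by blast
  have "\<exists>m. (\<forall>y\<in>S. 0 \<le> m y) \<and> (\<Sum>y\<in>S. m y) = 1 \<and> (\<forall>x\<in>S. (\<Sum>y\<in>S. (r x y - r y x) * m y) \<le> 0)"
    using card by (intro skew_symmetric_game_value[OF fin]) auto
  then obtain m where m: "\<forall>y\<in>S. 0 \<le> m y" "(\<Sum>y\<in>S. m y) = 1"
    "\<forall>x\<in>S. (\<Sum>y\<in>S. (r x y - r y x) * m y) \<le> 0" by blast
  have "0 \<le> (\<Sum>(x, y)\<in>site_pairs S. r x y)"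
    using r_nonneg by (intro sum_nonneg) (auto simp: site_pairs_def)
  from eventually_log_window[OF d(2) \<delta> rmin(2) this]
  have "eventually (\<lambda>N. \<forall>\<eta>\<in>config_space S N.
      incl_expected_hitting_time S r (d N) (U N) \<eta> \<le> ennreal (8 / (rmin * \<delta>) * real N)) sequentially"
  proof eventually_elim
    case (elim N)
    then have "0 < ln N" using \<delta> by (simp add: zero_less_mult_iff)
    then have "8 * real N * ln N / (rmin * (\<delta> * ln N)) = 8 / (rmin * \<delta>) * N" by simp
    then show ?case
      using incl_expected_hitting_time_le_log[where r = r and dN = "d N" and N = N and U = "U N",
          OF fin card d(1) r_nonneg rmin m _ _ _ crowded[where N = N]] elim by auto
  qed
  then show ?thesis by blast
qed

lemma SUP_incl_expected_hitting_time_eq_0: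
  assumes "config_space S N \<subseteq> U"
  shows "(SUP \<eta>\<in>config_space S N. incl_expected_hitting_time S r dN U \<eta>) = 0"
  using assms by (intro antisym SUP_least) (auto simp: incl_expected_hitting_time_eq_0)

lemma SUP_incl_expected_hitting_time_bounded:
  fixes r :: "'a \<Rightarrow> 'a \<Rightarrow> real" and dN l :: real
  assumes fin: "finite S" and card: "2 \<le> card S" and r_nonneg: "\<And>x y. x \<in> S \<Longrightarrow> y \<in> S \<Longrightarrow> 0 \<le> r x y"
    and r_pos: "\<And>x y. x \<in> S \<Longrightarrow> y \<in> S \<Longrightarrow> x \<noteq> y \<Longrightarrow> 0 < r x y"
    and "0 < dN" "0 \<le> l" and crowded: "\<And>\<zeta>. \<zeta> \<in> config_space S N - U \<Longrightarrow> \<forall>x\<in>S. l < \<zeta> x"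
  shows "\<exists>B. (SUP \<eta>\<in>config_space S N. incl_expected_hitting_time S r dN U \<eta>) \<le> ennreal B"
proof -
  obtain x0 y1 where pair: "(x0, y1) \<in> site_pairs S" using ex_site_pair[OF card] by blast
  have "1 \<le> \<zeta> x0" if "\<zeta> \<in> config_space S N - U" for \<zeta>
    using crowded[OF that] pair \<open>0 \<le> l\<close> by (fastforce simp: site_pairs_def)
  then obtain B where "\<forall>\<eta>\<in>config_space S N. incl_expected_hitting_time S r dN U \<eta> \<le> ennreal B"
    using incl_expected_hitting_time_bounded[where r = r and U = U and N = N,
        OF fin \<open>0 < dN\<close> r_nonneg pair]
      r_pos pair by (auto simp: site_pairs_def)
  then show ?thesis by (auto simp: SUP_le_iff)
qed

theorem theorem3p18:
  fixes S :: "'a set" and r :: "'a \<Rightarrow> 'a \<Rightarrow> real" and d :: "nat \<Rightarrow> real" and \<delta> :: real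
  assumes "finite S" and "card S \<ge> 2"
    and "\<And>x y. x \<in> S \<Longrightarrow> y \<in> S \<Longrightarrow> r x y \<ge> 0"
    and "\<And>x y. x \<in> S \<Longrightarrow> y \<in> S \<Longrightarrow> x \<noteq> y \<Longrightarrow> r x y > 0"
    and "\<And>N. d N > 0"
    and "(\<lambda>N. d N * real N ^ 2 / (ln (real N)) ^ 2) \<longlonglongrightarrow> 0"
    and "\<delta> > 0"
  shows "\<exists>C>0. \<forall>N.
     (SUP \<eta>\<in>config_space S N.
        incl_expected_hitting_time S r (d N)
          {\<zeta> \<in> config_space S N. \<exists>x\<in>S. real (\<zeta> x) \<le> \<delta> * ln (real N)} \<eta>)
     \<le> ennreal (C * real N)"
proof -
  note fin = assms(1) and card = assms(2) and r_nonneg = assms(3)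
  define U where "U N = {\<zeta> \<in> config_space S N. \<exists>x\<in>S. real (\<zeta> x) \<le> \<delta> * ln (real N)}" for N
  define f where "f N = (SUP \<eta>\<in>config_space S N. incl_expected_hitting_time S r (d N) (U N) \<eta>)" for N
  have crowded: "\<forall>x\<in>S. \<delta> * ln N < \<zeta> x" if "\<zeta> \<in> config_space S N - U N" for N \<zeta>
    using that by (auto simp: U_def not_le)
  obtain x0 where "x0 \<in> S" using card by fastforce
  then have "config_space S 0 \<subseteq> U 0"
    using config_space_le[OF _ fin, of _ 0 x0] by (auto simp: U_def)
  then have "f 0 = 0" by (simp add: f_def SUP_incl_expected_hitting_time_eq_0)
  moreover have "\<exists>B. f N \<le> ennreal B" for N
  proof -
    have "0 \<le> \<delta> * ln N" using \<open>0 < \<delta>\<close> by (cases "N = 0") auto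
    with crowded[where N = N] assms(4,5) show ?thesis unfolding f_def
      by (intro SUP_incl_expected_hitting_time_bounded[OF fin card r_nonneg]) auto
  qed
  moreover obtain c where "eventually (\<lambda>N. f N \<le> ennreal (c * real N)) sequentially"
    using eventually_incl_expected_hitting_time_le_linear[where r = r and U = U,
        OF fin card r_nonneg assms(4-7) crowded]
    by (auto simp: f_def SUP_le_iff)
  ultimately have "\<exists>C>0. \<forall>N. f N \<le> ennreal (C * real N)"
    by (rule ennreal_linear_bound_of_eventually)
  then show ?thesis by (simp add: f_def U_def)
qed

end
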